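(* For every $n$, every linear 3-uniform hypergraph on $n$ vertices that contains neither $\mathcal{W}^3$ nor $F_7$ as an induced subgraph has at most $\frac{n^2}{9}$ edges; that is, $\mathrm{ex}_{\mathrm{lin,ind}}(n,\{\mathcal{W}^3,F_7\})\le \frac{n^2}{9}$. Moreover, equality holds for infinitely many $n$.
   Context: A 3-uniform hypergraph is linear if any two distinct edges share at most one vertex. $\mathrm{ex}_{\mathrm{lin,ind}}(n,\mathcal{G})$ is the maximum number of edges of an $n$-vertex linear 3-uniform hypergraph containing no member of $\mathcal{G}$ as an induced subgraph (a vertex subset whose induced subhypergraph is isomorphic to that member). Here $\mathcal{W}^3$ denotes the hypergraph on vertices $\{1,\dots,6\}$ with edges $\{1,2,3\},\{3,4,5\},\{5,6,1\}$ (a linear 3-cycle), and $F_7$ denotes the Fano plane: the hypergraph on the 7 nonzero vectors of $\mathbb{F}_2^3$ whose edges are the triples $\{x,y,z\}$ of distinct vectors with $x+y+z=0$. *)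

theory Defs
  imports Complex_Main
begin

definition hyp3 :: "'a set \<Rightarrow> 'a set set \<Rightarrow> bool" where
  "hyp3 V E \<longleftrightarrow> finite V \<and> (\<forall>e\<in>E. e \<subseteq> V \<and> card e = 3)"

definition linear_hyp :: "'a set set \<Rightarrow> bool" where
  "linear_hyp E \<longleftrightarrow> (\<forall>e\<in>E. \<forall>f\<in>E. e \<noteq> f \<longrightarrow> card (e \<inter> f) \<le> 1)"

definition induced_copy :: "'a set \<Rightarrow> 'a set set \<Rightarrow> 'b set \<Rightarrow> 'b set set \<Rightarrow> bool" where
  "induced_copy V E VH EH \<longleftrightarrow>
     (\<exists>S f. S \<subseteq> V \<and> bij_betw f VH S \<and>
        (\<forall>e. e \<subseteq> VH \<longrightarrow> (e \<in> EH \<longleftrightarrow> f ` e \<in> E)))"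

definition W3_V :: "nat set" where "W3_V = {1..6}"
definition W3_E :: "nat set set" where
  "W3_E = {{1,2,3},{3,4,5},{5,6,1}}"

text \<open>The Fano plane: nonzero vectors of F_2^3 encoded as 3-bit numbers 1..7,
  vector addition being bitwise xor.\<close>
definition F7_V :: "nat set" where "F7_V = {1..7}"
definition F7_E :: "nat set set" where
  "F7_E = {{x,y,z} | x y z. x \<in> F7_V \<and> y \<in> F7_V \<and> z \<in> F7_V \<and>
             x \<noteq> y \<and> y \<noteq> z \<and> x \<noteq> z \<and> xor (xor x y) z = 0}"

definition ex_lin_ind :: "nat \<Rightarrow> (nat set \<times> nat set set) set \<Rightarrow> nat" where
  "ex_lin_ind n Fs = Max {card E | E. hyp3 {..<n} E \<and> linear_hyp E \<and>
       (\<forall>(VH, EH)\<in>Fs. \<not> induced_copy {..<n} E VH EH)}"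

end

(*
  Let d(v) be the degree of v.  For an edge {a, b, c} of a linear 3-graph, the
  neighbourhood of x in {a, b, c} has 2 d(x) - 2 vertices outside the edge.  A vertex adjacent
  to all of a, b, c would, by W3-freeness, close three linear triangles and thereby complete a
  Fano plane; so every vertex outside the edge is counted at most twice and
  d(a) + d(b) + d(c) <= n.  Summing over the edges gives sum_v d(v)^2 <= |E| n, and
  Cauchy-Schwarz together with sum_v d(v) = 3 |E| yields |E| <= n^2 / 9.

  For m = 2^k take three copies of {0..<m} and all triples {x, y, x XOR y} with one
  element in each copy.  This is linear with m^2 = (3m)^2 / 9 edges, it is 3-partite and hence
  contains no Fano plane, and every linear triangle in it closes, so it contains no induced W3.
*)
theory Submission
  imports Defs "HOL-Analysis.Convex"
begin

section \<open>Degree counting in linear 3-uniform hypergraphs\<close>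

definition vertex_degree :: "'a set set \<Rightarrow> 'a \<Rightarrow> nat" where
  "vertex_degree E v = card {e \<in> E. v \<in> e}"

definition neighbourhood :: "'a set set \<Rightarrow> 'a \<Rightarrow> 'a set" where
  "neighbourhood E v = (\<Union>e \<in> {e \<in> E. v \<in> e}. e - {v})"

lemma hyp3_finite_edges: "hyp3 V E \<Longrightarrow> finite E"
  unfolding hyp3_def by (metis Pow_iff finite_Pow_iff finite_subset subsetI)

lemma hyp3_edgeD:
  assumes "hyp3 V E" "e \<in> E"
  shows "e \<subseteq> V" "card e = 3" "finite e"
  using assms unfolding hyp3_def by (auto intro: finite_subset)

lemma linear_hyp_edge_eq:
  assumes "hyp3 V E" "linear_hyp E" "e \<in> E" "f \<in> E" "u \<in> e" "u \<in> f" "w \<in> e" "w \<in> f" "u \<noteq> w"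
  shows "e = f"
proof (rule ccontr)
  assume "e \<noteq> f"
  then have "card (e \<inter> f) \<le> 1"
    using assms(2-4) unfolding linear_hyp_def by blast
  moreover have "card {u, w} \<le> card (e \<inter> f)"
    using assms by (intro card_mono) (auto intro: hyp3_edgeD)
  ultimately show False
    using assms(9) by simp
qed

lemma neighbourhood_subset: "hyp3 V E \<Longrightarrow> neighbourhood E v \<subseteq> V"
  unfolding neighbourhood_def hyp3_def by blast

lemma sum_sum_eq_sum_card_incidences:
  fixes g :: "'a \<Rightarrow> 'b::comm_semiring_1"
  assumes "finite U" "finite I" "\<And>i. i \<in> I \<Longrightarrow> A i \<subseteq> U"
  shows "(\<Sum>i\<in>I. \<Sum>u\<in>A i. g u) = (\<Sum>u\<in>U. of_nat (card {i \<in> I. u \<in> A i}) * g u)"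
proof -
  have "(\<Sum>i\<in>I. \<Sum>u\<in>A i. g u) = (\<Sum>i\<in>I. \<Sum>u | u \<in> U \<and> u \<in> A i. g u)"
    using assms(3) by (intro sum.cong) (auto intro: sum.cong)
  also have "\<dots> = (\<Sum>u\<in>U. \<Sum>i | i \<in> I \<and> u \<in> A i. g u)"
    by (rule sum.swap_restrict[OF assms(2,1)])
  finally show ?thesis
    by simp
qed

lemma sum_edge_sum_eq_sum_degree:
  fixes g :: "'a \<Rightarrow> 'b::comm_semiring_1"
  assumes "hyp3 V E"
  shows "(\<Sum>e\<in>E. \<Sum>u\<in>e. g u) = (\<Sum>u\<in>V. of_nat (vertex_degree E u) * g u)"
  unfolding vertex_degree_def using assms hyp3_finite_edges[OF assms]
  by (intro sum_sum_eq_sum_card_incidences) (auto simp: hyp3_def)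

lemma card_neighbourhood:
  assumes "hyp3 V E" "linear_hyp E"
  shows "card (neighbourhood E v) = 2 * vertex_degree E v"
proof -
  have "card (neighbourhood E v) = (\<Sum>e \<in> {e \<in> E. v \<in> e}. card (e - {v}))"
    unfolding neighbourhood_def
  proof (rule card_UN_disjoint)
    show "finite {e \<in> E. v \<in> e}"
      using hyp3_finite_edges[OF assms(1)] by simp
    show "\<forall>e\<in>{e \<in> E. v \<in> e}. finite (e - {v})"
      using hyp3_edgeD[OF assms(1)] by blast
    show "\<forall>e\<in>{e \<in> E. v \<in> e}. \<forall>f\<in>{e \<in> E. v \<in> e}. e \<noteq> f \<longrightarrow> (e - {v}) \<inter> (f - {v}) = {}"
      using linear_hyp_edge_eq[OF assms] by blast
  qed
  also have "\<dots> = (\<Sum>e \<in> {e \<in> E. v \<in> e}. 2)"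
    using hyp3_edgeD[OF assms(1)] by (intro sum.cong) auto
  finally show ?thesis
    unfolding vertex_degree_def by simp
qed

lemma card_neighbourhood_diff_edge:
  assumes "hyp3 V E" "linear_hyp E" "e \<in> E" "x \<in> e"
  shows "card (neighbourhood E x - e) + 2 = 2 * vertex_degree E x"
proof -
  have sub: "e - {x} \<subseteq> neighbourhood E x"
    using assms(3,4) unfolding neighbourhood_def by blast
  have fin: "finite (neighbourhood E x)"
    using neighbourhood_subset[OF assms(1)] assms(1) unfolding hyp3_def by (blast intro: finite_subset)
  have two: "card (e - {x}) = 2"
    using hyp3_edgeD[OF assms(1,3)] assms(4) by simp
  have "neighbourhood E x - e = neighbourhood E x - (e - {x})"
    unfolding neighbourhood_def by blast
  then have "card (neighbourhood E x - e) = card (neighbourhood E x) - 2"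
    using card_Diff_subset[OF finite_subset[OF sub fin] sub] two by simp
  moreover have "2 \<le> card (neighbourhood E x)"
    using card_mono[OF fin sub] two by simp
  ultimately show ?thesis
    using card_neighbourhood[OF assms(1,2)] by simp
qed

lemma sum_card_le_twice_card:
  assumes "finite U" "finite I" "card I = 3" "\<And>i. i \<in> I \<Longrightarrow> A i \<subseteq> U"
    and "\<And>u. \<not> (\<forall>i\<in>I. u \<in> A i)"
  shows "(\<Sum>i\<in>I. card (A i)) \<le> 2 * card U"
proof -
  have "(\<Sum>i\<in>I. card (A i)) = (\<Sum>u\<in>U. card {i \<in> I. u \<in> A i})"
    using sum_sum_eq_sum_card_incidences[of U I A "\<lambda>_. 1::nat"] assms(1,2,4) by simp
  also have "\<dots> \<le> (\<Sum>u\<in>U. 2)"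
  proof (rule sum_mono)
    fix u
    have "{i \<in> I. u \<in> A i} \<subset> I"
      using assms(5)[of u] by blast
    then have "card {i \<in> I. u \<in> A i} < card I"
      by (rule psubset_card_mono[OF assms(2)])
    then show "card {i \<in> I. u \<in> A i} \<le> 2"
      using assms(3) by simp
  qed
  finally show ?thesis
    by simp
qed

lemma edge_degree_sum_le:
  assumes "hyp3 V E" "linear_hyp E" "e \<in> E"
    and no_common: "\<And>u. \<not> (\<forall>x\<in>e. u \<in> neighbourhood E x)"
  shows "(\<Sum>x\<in>e. vertex_degree E x) \<le> card V"
proof -
  have e: "e \<subseteq> V" "card e = 3" "finite e"
    using hyp3_edgeD[OF assms(1,3)] by auto
  have finV: "finite V"
    using assms(1) unfolding hyp3_def by simp
  have "2 * (\<Sum>x\<in>e. vertex_degree E x) = (\<Sum>x\<in>e. card (neighbourhood E x - e) + 2)"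
    unfolding sum_distrib_left using card_neighbourhood_diff_edge[OF assms(1-3)] by simp
  also have "\<dots> = (\<Sum>x\<in>e. card (neighbourhood E x - e)) + 6"
    using e by (simp add: sum.distrib del: add_2_eq_Suc')
  also have "\<dots> \<le> 2 * card (V - e) + 6"
  proof (intro add_right_mono sum_card_le_twice_card)
    show "\<not> (\<forall>x\<in>e. u \<in> neighbourhood E x - e)" for u
      using no_common by blast
  qed (use neighbourhood_subset[OF assms(1)] finV e in auto)
  also have "\<dots> = 2 * card V"
    using e finV card_mono[OF finV e(1)] by (simp add: card_Diff_subset)
  finally show ?thesis
    by simp
qed

lemma card_edges_le_if_edge_degree_sums_le:
  assumes "hyp3 V E" and edge_sum: "\<And>e. e \<in> E \<Longrightarrow> (\<Sum>x\<in>e. vertex_degree E x) \<le> card V"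
  shows "real (card E) \<le> real (card V) ^ 2 / 9"
proof -
  define d where "d v = real (vertex_degree E v)" for v
  define m where "m = real (card E)"
  define n where "n = real (card V)"
  have "(\<Sum>v\<in>V. d v) = (\<Sum>e\<in>E. \<Sum>v\<in>e. 1)"
    unfolding d_def using sum_edge_sum_eq_sum_degree[OF assms(1), of "\<lambda>_. 1::real"] by simp
  also have "\<dots> = 3 * m"
    unfolding m_def using hyp3_edgeD(2)[OF assms(1)] by simp
  finally have degree_sum: "(\<Sum>v\<in>V. d v) = 3 * m" .
  have "(\<Sum>v\<in>V. (d v)\<^sup>2) = (\<Sum>e\<in>E. \<Sum>v\<in>e. d v)"
    using sum_edge_sum_eq_sum_degree[OF assms(1), of d] by (simp add: d_def power2_eq_square)
  also have "\<dots> \<le> (\<Sum>e\<in>E. n)"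
    unfolding d_def n_def using edge_sum by (intro sum_mono) (simp flip: of_nat_sum)
  finally have square_sum: "(\<Sum>v\<in>V. (d v)\<^sup>2) \<le> m * n"
    unfolding m_def by simp
  have "9 * m\<^sup>2 \<le> (\<Sum>v\<in>V. (d v)\<^sup>2) * n"
    using sum_squared_le_sum_of_squares[of d V] degree_sum unfolding n_def by (simp add: power2_eq_square)
  also have "\<dots> \<le> m * n\<^sup>2"
    using mult_right_mono[OF square_sum, of n] unfolding n_def by (simp add: power2_eq_square mult.assoc)
  finally have "9 * m\<^sup>2 \<le> m * n\<^sup>2" .
  then have "m \<le> n\<^sup>2 / 9"
    unfolding m_def by (cases "card E = 0") (auto simp: power2_eq_square)
  then show ?thesis
    unfolding m_def n_def .
qed

section \<open>Forbidden induced configurations\<close>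

lemma induced_copyI:
  assumes "inj_on f VH" "f ` VH \<subseteq> V" "\<And>e. e \<in> EH \<Longrightarrow> e \<subseteq> VH"
    and "\<And>e. e \<in> EH \<Longrightarrow> f ` e \<in> E"
    and "\<And>T. T \<in> E \<Longrightarrow> T \<subseteq> f ` VH \<Longrightarrow> T \<in> (`) f ` EH"
  shows "induced_copy V E VH EH"
  unfolding induced_copy_def
proof (intro exI conjI allI impI iffI)
  show "bij_betw f VH (f ` VH)"
    using assms(1) by (rule inj_on_imp_bij_betw)
  fix e assume e: "e \<subseteq> VH"
  show "f ` e \<in> E" if "e \<in> EH"
    using assms(4) that .
  show "e \<in> EH" if edge: "f ` e \<in> E"
  proof -
    obtain e' where "e' \<in> EH" "f ` e = f ` e'"
      using assms(5)[OF edge] e by blast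
    then show ?thesis
      using inj_on_image_eq_iff[OF assms(1) e assms(3)] by simp
  qed
qed (use assms(2) in simp)

lemma induced_copyE:
  assumes "induced_copy V E VH EH"
  obtains f where "inj_on f VH" "f ` VH \<subseteq> V" "\<And>e. e \<subseteq> VH \<Longrightarrow> e \<in> EH \<longleftrightarrow> f ` e \<in> E"
proof -
  obtain S f where "S \<subseteq> V" "bij_betw f VH S" "\<forall>e. e \<subseteq> VH \<longrightarrow> (e \<in> EH \<longleftrightarrow> f ` e \<in> E)"
    using assms unfolding induced_copy_def by blast
  then show ?thesis
    using that by (auto simp: bij_betw_def)
qed

lemma induced_copy_labelled:
  fixes xs :: "'a list"
  assumes "distinct xs" "set xs \<subseteq> V" "VH = {1..length xs}" "\<And>e. e \<in> EH \<Longrightarrow> e \<subseteq> VH"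
    and "\<And>e. e \<in> EH \<Longrightarrow> (\<lambda>i. xs ! (i - 1)) ` e \<in> E"
    and "\<And>T. T \<in> E \<Longrightarrow> T \<subseteq> set xs \<Longrightarrow> T \<in> (`) (\<lambda>i. xs ! (i - 1)) ` EH"
  shows "induced_copy V E VH EH"
proof (rule induced_copyI)
  show "inj_on (\<lambda>i. xs ! (i - 1)) VH"
    using assms(1,3) by (auto intro!: inj_onI simp: nth_eq_iff_index_eq)
  have "(\<lambda>i. xs ! (i - 1)) ` VH = set xs"
    unfolding assms(3) set_conv_nth by (force simp: image_iff)
  then show "(\<lambda>i. xs ! (i - 1)) ` VH \<subseteq> V"
    using assms(2) by simp
  show "\<And>T. T \<in> E \<Longrightarrow> T \<subseteq> (\<lambda>i. xs ! (i - 1)) ` VH \<Longrightarrow> T \<in> (`) (\<lambda>i. xs ! (i - 1)) ` EH"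
    using assms(6) \<open>(\<lambda>i. xs ! (i - 1)) ` VH = set xs\<close> by simp
qed (use assms(4,5) in auto)

lemma xor_cancel_left: "xor a (xor a b) = (b::'a::semiring_bit_operations)"
  by (simp flip: xor.assoc)

lemma xor_eq_0_iff: "xor a b = 0 \<longleftrightarrow> a = (b::'a::semiring_bit_operations)"
  by (metis xor_cancel_left xor.right_neutral xor_self_eq)

lemma F7_V_eq: "F7_V = {1,2,3,4,5,6,7}"
  by (auto simp: F7_V_def)

lemma F7_E_eq: "F7_E = {{1,2,3}, {1,4,5}, {1,6,7}, {2,4,6}, {2,5,7}, {3,4,7}, {3,5,6}}"
proof
  show "F7_E \<subseteq> {{1,2,3}, {1,4,5}, {1,6,7}, {2,4,6}, {2,5,7}, {3,4,7}, {3,5,6}}"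
  proof
    fix e assume "e \<in> F7_E"
    then obtain x y z where xy: "x \<in> F7_V" "y \<in> F7_V" "x \<noteq> y"
      and "e = {x, y, z}" "xor (xor x y) z = 0"
      unfolding F7_E_def by blast
    then have e: "e = {x, y, xor x y}"
      by (simp add: xor_eq_0_iff)
    show "e \<in> {{1,2,3}, {1,4,5}, {1,6,7}, {2,4,6}, {2,5,7}, {3,4,7}, {3,5,6}}"
      using xy unfolding e F7_V_eq
      by (elim insertE emptyE) (simp_all add: insert_commute flip: One_nat_def)
  qed
  have line: "{a, b, c} \<in> F7_E"
    if "a \<in> F7_V" "b \<in> F7_V" "c \<in> F7_V" "distinct [a, b, c]" "xor (xor a b) c = 0" for a b c
    using that unfolding F7_E_def by auto
  show "{{1,2,3}, {1,4,5}, {1,6,7}, {2,4,6}, {2,5,7}, {3,4,7}, {3,5,6}} \<subseteq> F7_E"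
    by (simp add: line F7_V_eq)
qed

lemma edges_within_linear_triangle:
  assumes H: "hyp3 V E" and L: "linear_hyp E" and distinct: "distinct [x1, x2, x3, x4, x5, x6]"
    and edges: "{x1, x2, x3} \<in> E" "{x3, x4, x5} \<in> E" "{x5, x6, x1} \<in> E"
    and T: "T \<in> E" "T \<subseteq> {x1, x2, x3, x4, x5, x6}"
  shows "T = {x1, x2, x3} \<or> T = {x3, x4, x5} \<or> T = {x5, x6, x1} \<or> T = {x2, x4, x6}"
proof (rule ccontr)
  assume other: "\<not> ?thesis"
  have meets_once: "u = w"
    if "Q \<in> {{x1, x2, x3}, {x3, x4, x5}, {x5, x6, x1}}" "u \<in> T" "w \<in> T" "u \<in> Q" "w \<in> Q" for Q u w
  proof (rule ccontr)
    assume "u \<noteq> w"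
    then have "T = Q"
      using linear_hyp_edge_eq[OF H L T(1), of Q u w] that edges by blast
    then show False
      using that(1) other by blast
  qed
  have not_pair: "\<not> T \<subseteq> {u, w}" for u w
  proof
    assume "T \<subseteq> {u, w}"
    then have "card T \<le> card {u, w}"
      by (simp add: card_mono)
    also have "\<dots> \<le> 2"
      by (cases "u = w") simp_all
    finally show False
      using hyp3_edgeD(2)[OF H T(1)] by simp
  qed
  have "x1 \<notin> T"
    using not_pair[of x1 x4] meets_once[of "{x1, x2, x3}" x1] meets_once[of "{x5, x6, x1}" x1] T(2) distinct
    by auto
  moreover have "x3 \<notin> T"
    using not_pair[of x3 x6] meets_once[of "{x1, x2, x3}" x3] meets_once[of "{x3, x4, x5}" x3] T(2) distinct
    by auto
  moreover have "x5 \<notin> T"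
    using not_pair[of x5 x2] meets_once[of "{x3, x4, x5}" x5] meets_once[of "{x5, x6, x1}" x5] T(2) distinct
    by auto
  ultimately have "T \<subseteq> {x2, x4, x6}"
    using T(2) by blast
  moreover have "card {x2, x4, x6} = card T"
    using distinct hyp3_edgeD(2)[OF H T(1)] by simp
  ultimately show False
    using other by (metis card_subset_eq finite.emptyI finite.insertI)
qed

lemma linear_triangle_closes:
  assumes H: "hyp3 V E" and L: "linear_hyp E" and no_W3: "\<not> induced_copy V E W3_V W3_E"
    and "{x1, x2, x3, x4, x5, x6} \<subseteq> V" and distinct: "distinct [x1, x2, x3, x4, x5, x6]"
    and edges: "{x1, x2, x3} \<in> E" "{x3, x4, x5} \<in> E" "{x5, x6, x1} \<in> E"
  shows "{x2, x4, x6} \<in> E"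
proof (rule ccontr)
  assume open_triangle: "{x2, x4, x6} \<notin> E"
  have "induced_copy V E W3_V W3_E"
  proof (rule induced_copy_labelled[OF distinct])
    have labelled_edges:
      "(`) (\<lambda>i. [x1, x2, x3, x4, x5, x6] ! (i - 1)) ` W3_E = {{x1, x2, x3}, {x3, x4, x5}, {x5, x6, x1}}"
      by (simp add: W3_E_def)
    show "W3_V = {1..length [x1, x2, x3, x4, x5, x6]}"
      by (simp add: W3_V_def)
    fix T assume "T \<in> E" "T \<subseteq> set [x1, x2, x3, x4, x5, x6]"
    then have "T = {x1, x2, x3} \<or> T = {x3, x4, x5} \<or> T = {x5, x6, x1} \<or> T = {x2, x4, x6}"
      using edges_within_linear_triangle[OF H L distinct edges] by simp
    then show "T \<in> (`) (\<lambda>i. [x1, x2, x3, x4, x5, x6] ! (i - 1)) ` W3_E"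
      unfolding labelled_edges using open_triangle \<open>T \<in> E\<close> by (elim disjE) simp_all
  qed (use assms(4) edges in \<open>auto simp: W3_V_def W3_E_def\<close>)
  then show False
    using no_W3 by simp
qed

lemma induced_F7I:
  assumes H: "hyp3 V E" and L: "linear_hyp E"
    and "{x1, x2, x3, x4, x5, x6, x7} \<subseteq> V" and distinct: "distinct [x1, x2, x3, x4, x5, x6, x7]"
    and lines: "{x1, x2, x3} \<in> E" "{x1, x4, x5} \<in> E" "{x1, x6, x7} \<in> E" "{x2, x4, x6} \<in> E"
      "{x2, x5, x7} \<in> E" "{x3, x4, x7} \<in> E" "{x3, x5, x6} \<in> E"
  shows "induced_copy V E F7_V F7_E"
proof (rule induced_copy_labelled[OF distinct])
  show "F7_V = {1..length [x1, x2, x3, x4, x5, x6, x7]}"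
    by (simp add: F7_V_def)
  define Ls where "Ls = {{x1, x2, x3}, {x1, x4, x5}, {x1, x6, x7}, {x2, x4, x6},
      {x2, x5, x7}, {x3, x4, x7}, {x3, x5, x6}}"
  have labelled_lines: "(`) (\<lambda>i. [x1, x2, x3, x4, x5, x6, x7] ! (i - 1)) ` F7_E = Ls"
    by (simp add: F7_E_eq Ls_def)
  have collinear: "\<exists>Q\<in>Ls. u \<in> Q \<and> w \<in> Q"
    if "u \<in> {x1, x2, x3, x4, x5, x6, x7}" "w \<in> {x1, x2, x3, x4, x5, x6, x7}" for u w
    using that unfolding Ls_def by (elim insertE emptyE) simp_all
  fix T assume T: "T \<in> E" "T \<subseteq> set [x1, x2, x3, x4, x5, x6, x7]"
  obtain u w where "u \<in> T" "w \<in> T" "u \<noteq> w"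
    using hyp3_edgeD(2)[OF H T(1)] by (auto simp: card_3_iff)
  moreover obtain Q where "Q \<in> Ls" "u \<in> Q" "w \<in> Q"
    using collinear[of u w] T(2) \<open>u \<in> T\<close> \<open>w \<in> T\<close> by auto
  moreover have "Ls \<subseteq> E"
    unfolding Ls_def using lines by simp
  ultimately have "T = Q"
    using linear_hyp_edge_eq[OF H L T(1), of Q u w] by blast
  then show "T \<in> (`) (\<lambda>i. [x1, x2, x3, x4, x5, x6, x7] ! (i - 1)) ` F7_E"
    unfolding labelled_lines using \<open>Q \<in> Ls\<close> by simp
qed (use assms(3) lines in \<open>auto simp: F7_V_def F7_E_eq\<close>)

lemma neighbourhood_edgeE:
  assumes "hyp3 V E" "u \<in> neighbourhood E x"
  obtains p where "{x, u, p} \<in> E" "distinct [x, u, p]"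
proof -
  obtain f where f: "f \<in> E" "x \<in> f" "u \<in> f" "u \<noteq> x"
    using assms(2) unfolding neighbourhood_def by blast
  then have "card (f - {x, u}) = 1"
    using hyp3_edgeD[OF assms(1) f(1)] by (simp add: card_Diff_subset)
  then obtain p where "f - {x, u} = {p}"
    by (rule card_1_singletonE)
  then have "f = {x, u, p}" "distinct [x, u, p]"
    using f by auto
  then show ?thesis
    using f(1) that by simp
qed

lemma no_common_neighbour:
  assumes H: "hyp3 V E" and L: "linear_hyp E"
    and no_W3: "\<not> induced_copy V E W3_V W3_E" and no_F7: "\<not> induced_copy V E F7_V F7_E"
    and "e \<in> E"
  shows "\<not> (\<forall>x\<in>e. u \<in> neighbourhood E x)"
proof
  assume common: "\<forall>x\<in>e. u \<in> neighbourhood E x"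
  obtain a b c where e: "e = {a, b, c}" "distinct [a, b, c]"
    using hyp3_edgeD(2)[OF H \<open>e \<in> E\<close>] by (auto simp: card_3_iff)
  obtain p where p: "{a, u, p} \<in> E" "distinct [a, u, p]"
    using neighbourhood_edgeE[OF H] common e(1) by blast
  obtain q where q: "{b, u, q} \<in> E" "distinct [b, u, q]"
    using neighbourhood_edgeE[OF H] common e(1) by blast
  obtain r where r: "{c, u, r} \<in> E" "distinct [c, u, r]"
    using neighbourhood_edgeE[OF H] common e(1) by blast
  note same_edge = linear_hyp_edge_eq[OF H L]
  have "u \<notin> e"
    using e p q r by auto
  then have "p \<notin> e" "q \<notin> e" "r \<notin> e"
    using same_edge[OF \<open>e \<in> E\<close> p(1), of a p] same_edge[OF \<open>e \<in> E\<close> q(1), of b q]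
      same_edge[OF \<open>e \<in> E\<close> r(1), of c r] e p q r by auto
  have apart: "w \<noteq> w'"
    if "{x, u, w} \<in> E" "{x', u, w'} \<in> E" "w \<noteq> u" "x' \<notin> {x, u, w}" for x x' w w'
  proof
    assume "w = w'"
    then have "{x, u, w} = {x', u, w'}"
      using same_edge[OF that(1,2), of u w] that(3) by simp
    then show False
      using that(4) by blast
  qed
  have "p \<noteq> q" "p \<noteq> r" "q \<noteq> r"
    using apart[OF p(1) q(1)] apart[OF p(1) r(1)] apart[OF q(1) r(1)]
      \<open>p \<notin> e\<close> \<open>q \<notin> e\<close> e p q r by auto
  then have distinct: "distinct [a, b, c, u, p, q, r]"
    using \<open>u \<notin> e\<close> \<open>p \<notin> e\<close> \<open>q \<notin> e\<close> \<open>r \<notin> e\<close> e p q r by auto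
  have in_V: "{a, b, c, u, p, q, r} \<subseteq> V"
    using hyp3_edgeD(1)[OF H] \<open>e \<in> E\<close> e(1) p(1) q(1) r(1) by blast
  txt \<open>Closing the linear triangles through u yields the remaining Fano lines.\<close>
  have "{c, q, p} \<in> E"
    by (rule linear_triangle_closes[OF H L no_W3, of a c b q u p])
      (use in_V distinct \<open>e \<in> E\<close> e(1) p(1) q(1) in \<open>auto simp: insert_commute\<close>)
  moreover have "{b, r, p} \<in> E"
    by (rule linear_triangle_closes[OF H L no_W3, of a b c r u p])
      (use in_V distinct \<open>e \<in> E\<close> e(1) p(1) r(1) in \<open>auto simp: insert_commute\<close>)
  moreover have "{a, r, q} \<in> E"
    by (rule linear_triangle_closes[OF H L no_W3, of b a c r u q])
      (use in_V distinct \<open>e \<in> E\<close> e(1) q(1) r(1) in \<open>auto simp: insert_commute\<close>)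
  ultimately have "induced_copy V E F7_V F7_E"
    by (intro induced_F7I[OF H L in_V distinct])
      (use \<open>e \<in> E\<close> e(1) p(1) q(1) r(1) in \<open>simp_all add: insert_commute\<close>)
  then show False
    using no_F7 by simp
qed

lemma card_edges_le_if_linear_W3_F7_free:
  assumes "hyp3 V E" "linear_hyp E" "\<not> induced_copy V E W3_V W3_E" "\<not> induced_copy V E F7_V F7_E"
  shows "real (card E) \<le> real (card V) ^ 2 / 9"
  using card_edges_le_if_edge_degree_sums_le[OF assms(1)] edge_degree_sum_le[OF assms(1,2)]
    no_common_neighbour[OF assms] by blast

section \<open>The extremal construction\<close>

lemma no_induced_F7_if_3_partite:
  fixes col :: "'a \<Rightarrow> nat"
  assumes col_lt: "\<And>T u. T \<in> E \<Longrightarrow> u \<in> T \<Longrightarrow> col u < 3"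
    and col_neq: "\<And>T u w. T \<in> E \<Longrightarrow> u \<in> T \<Longrightarrow> w \<in> T \<Longrightarrow> u \<noteq> w \<Longrightarrow> col u \<noteq> col w"
  shows "\<not> induced_copy V E F7_V F7_E"
proof
  assume "induced_copy V E F7_V F7_E"
  then obtain f where "inj_on f F7_V" and copy: "\<And>e. e \<subseteq> F7_V \<Longrightarrow> e \<in> F7_E \<longleftrightarrow> f ` e \<in> E"
    by (elim induced_copyE) blast
  then have distinct: "distinct [f 1, f 2, f 3, f 4]"
    unfolding F7_V_eq by (auto dest: inj_onD)
  have lines: "f ` {1, 2, 3} \<in> E" "f ` {1, 4, 5} \<in> E" "f ` {2, 4, 6} \<in> E" "f ` {3, 4, 7} \<in> E"
    using copy[of "{1, 2, 3}"] copy[of "{1, 4, 5}"] copy[of "{2, 4, 6}"] copy[of "{3, 4, 7}"]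
    by (simp_all add: F7_V_eq F7_E_eq)
  have "col (f 1) \<noteq> col (f 2)" "col (f 1) \<noteq> col (f 3)" "col (f 2) \<noteq> col (f 3)"
    "col (f 1) \<noteq> col (f 4)" "col (f 2) \<noteq> col (f 4)" "col (f 3) \<noteq> col (f 4)"
    using col_neq[OF lines(1)] col_neq[OF lines(2)] col_neq[OF lines(3)] col_neq[OF lines(4)] distinct
    by simp_all
  moreover have "col (f 1) < 3" "col (f 2) < 3" "col (f 3) < 3" "col (f 4) < 3"
    using col_lt[OF lines(1)] col_lt[OF lines(2)] by simp_all
  ultimately show False
    by linarith
qed

lemma xor_left_eq_iff: "xor a b = xor a c \<longleftrightarrow> b = (c::'a::semiring_bit_operations)"
  by (metis xor_cancel_left)

lemma xor_right_eq_iff: "xor b a = xor c a \<longleftrightarrow> b = (c::'a::semiring_bit_operations)"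
  by (metis xor_left_eq_iff xor.commute)

lemma xor_triple_nth_eq:
  fixes x y x' y' :: "'a::semiring_bit_operations"
  assumes "i < 3" "j < 3" "i \<noteq> j"
    and "[x, y, xor x y] ! i = [x', y', xor x' y'] ! i" "[x, y, xor x y] ! j = [x', y', xor x' y'] ! j"
  shows "x = x' \<and> y = y'"
proof -
  have "i = 0 \<or> i = 1 \<or> i = 2" "j = 0 \<or> j = 1 \<or> j = 2"
    using assms(1,2) by auto
  then show ?thesis
    using assms(3-5) by (elim disjE) (auto simp: xor_left_eq_iff xor_right_eq_iff)
qed

lemma xor_triple_nth_xor_eq_0:
  fixes x y :: "'a::semiring_bit_operations"
  assumes "i < 3" "j < 3" "k < 3" "i \<noteq> j" "j \<noteq> k" "i \<noteq> k"
  shows "xor ([x, y, xor x y] ! i) (xor ([x, y, xor x y] ! j) ([x, y, xor x y] ! k)) = 0"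
proof -
  have "i = 0 \<or> i = 1 \<or> i = 2" "j = 0 \<or> j = 1 \<or> j = 2" "k = 0 \<or> k = 1 \<or> k = 2"
    using assms(1-3) by auto
  then show ?thesis
    using assms(4-6) by (elim disjE) (simp_all add: ac_simps xor_cancel_left)
qed

lemma xor_less_power2: "x < 2 ^ k \<Longrightarrow> y < 2 ^ k \<Longrightarrow> xor x y < (2::nat) ^ k"
  by (metis take_bit_nat_eq_self_iff take_bit_xor)

text \<open>Vertex i * m + x, for i < 3 and x < m, is the copy of x in part i.\<close>
definition xor_hypergraph :: "nat \<Rightarrow> nat set set" where
  "xor_hypergraph m = (\<lambda>(x, y). {x, m + y, 2 * m + xor x y}) ` ({..<m} \<times> {..<m})"

context
  fixes m :: nat
  assumes xor_closed: "\<And>x y. x < m \<Longrightarrow> y < m \<Longrightarrow> xor x y < m"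
begin

lemma mem_xor_edge_iff:
  assumes "x < m" "y < m"
  shows "u \<in> {x, m + y, 2 * m + xor x y} \<longleftrightarrow> u < 3 * m \<and> u mod m = [x, y, xor x y] ! (u div m)"
proof
  assume "u \<in> {x, m + y, 2 * m + xor x y}"
  then show "u < 3 * m \<and> u mod m = [x, y, xor x y] ! (u div m)"
    using assms xor_closed[OF assms] by auto
next
  assume u: "u < 3 * m \<and> u mod m = [x, y, xor x y] ! (u div m)"
  have "i * m + [x, y, xor x y] ! i \<in> {x, m + y, 2 * m + xor x y}" if "i < 3" for i
  proof -
    have "i = 0 \<or> i = 1 \<or> i = 2"
      using that by auto
    then show ?thesis
      by (elim disjE) simp_all
  qed
  moreover have "u div m < 3"
    using u by (simp add: div_less_iff_less_mult)
  moreover have "u = u div m * m + [x, y, xor x y] ! (u div m)"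
    using u div_mult_mod_eq[of u m] by simp
  ultimately show "u \<in> {x, m + y, 2 * m + xor x y}"
    by metis
qed

lemma xor_hypergraph_edgeE:
  assumes "T \<in> xor_hypergraph m"
  obtains x y where "x < m" "y < m" "T = {x, m + y, 2 * m + xor x y}"
  using assms unfolding xor_hypergraph_def by auto

lemma xor_hypergraph_vertex_lt: "T \<in> xor_hypergraph m \<Longrightarrow> u \<in> T \<Longrightarrow> u < 3 * m"
  by (metis xor_hypergraph_edgeE mem_xor_edge_iff)

lemma xor_hypergraph_div_neq:
  assumes "T \<in> xor_hypergraph m" "u \<in> T" "w \<in> T" "u \<noteq> w"
  shows "u div m \<noteq> w div m"
proof
  assume same_div: "u div m = w div m"
  obtain x y where "x < m" "y < m" "T = {x, m + y, 2 * m + xor x y}"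
    using assms(1) by (rule xor_hypergraph_edgeE)
  then have "u mod m = w mod m"
    using assms(2,3) same_div mem_xor_edge_iff by simp
  then show False
    using assms(4) same_div by (metis div_mult_mod_eq)
qed

lemma xor_edge_params_eq:
  assumes "x < m" "y < m" "x' < m" "y' < m"
    and "u \<in> {x, m + y, 2 * m + xor x y}" "u \<in> {x', m + y', 2 * m + xor x' y'}"
    and "w \<in> {x, m + y, 2 * m + xor x y}" "w \<in> {x', m + y', 2 * m + xor x' y'}"
    and "u div m \<noteq> w div m"
  shows "x = x' \<and> y = y'"
proof (rule xor_triple_nth_eq)
  show "u div m < 3" "w div m < 3"
    using assms(1,2,5,7) mem_xor_edge_iff by (simp_all add: div_less_iff_less_mult)
  show "[x, y, xor x y] ! (u div m) = [x', y', xor x' y'] ! (u div m)"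
    "[x, y, xor x y] ! (w div m) = [x', y', xor x' y'] ! (w div m)"
    using assms(1-8) mem_xor_edge_iff by (metis, metis)
qed (rule assms(9))

lemma hyp3_xor_hypergraph: "hyp3 {..<3 * m} (xor_hypergraph m)"
  unfolding hyp3_def
proof (intro conjI ballI)
  fix T assume T: "T \<in> xor_hypergraph m"
  then show "T \<subseteq> {..<3 * m}"
    using xor_hypergraph_vertex_lt by blast
  obtain x y where "x < m" "y < m" "T = {x, m + y, 2 * m + xor x y}"
    using T by (rule xor_hypergraph_edgeE)
  then show "card T = 3"
    using xor_closed by simp
qed simp

lemma linear_xor_hypergraph: "linear_hyp (xor_hypergraph m)"
  unfolding linear_hyp_def
proof (intro ballI impI)
  fix e f assume e: "e \<in> xor_hypergraph m" and f: "f \<in> xor_hypergraph m" and "e \<noteq> f"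
  obtain x y where xy: "x < m" "y < m" "e = {x, m + y, 2 * m + xor x y}"
    using e by (rule xor_hypergraph_edgeE)
  obtain x' y' where xy': "x' < m" "y' < m" "f = {x', m + y', 2 * m + xor x' y'}"
    using f by (rule xor_hypergraph_edgeE)
  have "u = w" if "u \<in> e \<inter> f" "w \<in> e \<inter> f" for u w
  proof (rule ccontr)
    assume "u \<noteq> w"
    then have "u div m \<noteq> w div m"
      using xor_hypergraph_div_neq[OF e] that by blast
    then have "x = x' \<and> y = y'"
      using xor_edge_params_eq[OF xy(1,2) xy'(1,2)] that xy(3) xy'(3) by blast
    then show False
      using \<open>e \<noteq> f\<close> xy(3) xy'(3) by simp
  qed
  moreover have "finite (e \<inter> f)"
    using xy(3) by simp
  ultimately show "card (e \<inter> f) \<le> 1"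
    by (metis One_nat_def card_le_Suc0_iff_eq)
qed

lemma card_xor_hypergraph: "card (xor_hypergraph m) = m\<^sup>2"
proof -
  have "inj_on (\<lambda>(x, y). {x, m + y, 2 * m + xor x y}) ({..<m} \<times> {..<m})"
  proof (rule inj_onI, clarsimp)
    fix x y x' y' assume params: "x < m" "y < m" "x' < m" "y' < m"
      and eq: "{x, m + y, 2 * m + xor x y} = {x', m + y', 2 * m + xor x' y'}"
    have "x \<in> {x, m + y, 2 * m + xor x y}" "m + y \<in> {x, m + y, 2 * m + xor x y}"
      by simp_all
    moreover note this[unfolded eq]
    moreover have "x div m \<noteq> (m + y) div m"
      using params(1,2) by (simp add: div_add_self1)
    ultimately show "x = x' \<and> y = y'"
      by (intro xor_edge_params_eq[OF params])
  qed
  then show ?thesis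
    unfolding xor_hypergraph_def by (simp add: card_image power2_eq_square)
qed

lemma xor_hypergraph_xor_eq_0:
  assumes "T \<in> xor_hypergraph m" "u \<in> T" "w \<in> T" "z \<in> T" "u \<noteq> w" "w \<noteq> z" "u \<noteq> z"
  shows "xor (u mod m) (xor (w mod m) (z mod m)) = 0"
proof -
  obtain x y where xy: "x < m" "y < m" "T = {x, m + y, 2 * m + xor x y}"
    using assms(1) by (rule xor_hypergraph_edgeE)
  have "u div m \<noteq> w div m" "w div m \<noteq> z div m" "u div m \<noteq> z div m"
    using xor_hypergraph_div_neq[OF assms(1)] assms(2-7) by blast+
  moreover have "u div m < 3" "w div m < 3" "z div m < 3"
    using xor_hypergraph_vertex_lt[OF assms(1)] assms(2-4) by (simp_all add: less_mult_imp_div_less)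
  ultimately show ?thesis
    using xor_triple_nth_xor_eq_0 assms(2-4) mem_xor_edge_iff[OF xy(1,2)] xy(3) by simp
qed

lemma xor_hypergraph_edgeI:
  assumes "u < 3 * m" "w < 3 * m" "z < 3 * m"
    and "u div m \<noteq> w div m" "w div m \<noteq> z div m" "u div m \<noteq> z div m"
    and "xor (u mod m) (xor (w mod m) (z mod m)) = 0"
  shows "{u, w, z} \<in> xor_hypergraph m"
proof -
  have ordered: "{a, b, c} \<in> xor_hypergraph m"
    if "a div m = 0" "b div m = 1" "c div m = 2" "xor (a mod m) (xor (b mod m) (c mod m)) = 0" for a b c
  proof -
    have "m \<noteq> 0"
      using that(2) by (metis div_by_0 zero_neq_one)
    define x y where "x = a mod m" and "y = b mod m"
    have "x < m" "y < m"
      using \<open>m \<noteq> 0\<close> unfolding x_def y_def by simp_all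
    have "c mod m = xor x y"
      using that(4) unfolding x_def y_def by (metis xor.assoc xor_eq_0_iff)
    then have "{a, b, c} = {x, m + y, 2 * m + xor x y}"
      using that(1-3) div_mult_mod_eq[of a m] div_mult_mod_eq[of b m] div_mult_mod_eq[of c m]
      unfolding x_def y_def by simp
    then show ?thesis
      unfolding xor_hypergraph_def using \<open>x < m\<close> \<open>y < m\<close> by (auto intro: rev_image_eqI[of "(x, y)"])
  qed
  txt \<open>Both the set and the XOR condition are invariant under permuting u, w, z.\<close>
  have "u div m \<in> {0, 1, 2}" "w div m \<in> {0, 1, 2}" "z div m \<in> {0, 1, 2}"
    using less_mult_imp_div_less[of u 3 m] less_mult_imp_div_less[of w 3 m]
      less_mult_imp_div_less[of z 3 m] assms(1-3)
    by (auto simp: numeral_3_eq_3 less_Suc_eq)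
  then show ?thesis
    using assms(4-7) ordered[of u w z] ordered[of u z w] ordered[of w u z]
      ordered[of w z u] ordered[of z u w] ordered[of z w u]
    by (elim insertE emptyE) (simp_all add: insert_commute ac_simps)
qed

lemma xor_hypergraph_no_induced_W3: "\<not> induced_copy V (xor_hypergraph m) W3_V W3_E"
proof
  assume "induced_copy V (xor_hypergraph m) W3_V W3_E"
  then obtain f where "inj_on f W3_V"
    and copy: "\<And>e. e \<subseteq> W3_V \<Longrightarrow> e \<in> W3_E \<longleftrightarrow> f ` e \<in> xor_hypergraph m"
    by (elim induced_copyE) blast
  have W3_V: "W3_V = {1, 2, 3, 4, 5, 6}"
    by (auto simp: W3_V_def)
  have distinct: "distinct [f 1, f 2, f 3, f 4, f 5, f 6]"
    using \<open>inj_on f W3_V\<close> unfolding W3_V by (auto dest: inj_onD)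
  have edges: "{f 1, f 2, f 3} \<in> xor_hypergraph m" "{f 3, f 4, f 5} \<in> xor_hypergraph m"
      "{f 1, f 5, f 6} \<in> xor_hypergraph m"
    using copy[of "{1, 2, 3}"] copy[of "{3, 4, 5}"] copy[of "{5, 6, 1}"]
    by (simp_all add: W3_V W3_E_def insert_commute)
  have "{2, 4, 6} \<notin> W3_E"
    unfolding W3_E_def by (simp add: set_eq_iff) presburger
  then have open_triangle: "{f 2, f 4, f 6} \<notin> xor_hypergraph m"
    using copy[of "{2, 4, 6}"] by (simp add: W3_V)
  define c where "c i = f i div m" for i
  have "c 1 \<noteq> c 2" "c 1 \<noteq> c 3" "c 2 \<noteq> c 3" "c 3 \<noteq> c 4" "c 3 \<noteq> c 5" "c 4 \<noteq> c 5"
    "c 1 \<noteq> c 5" "c 1 \<noteq> c 6" "c 5 \<noteq> c 6"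
    unfolding c_def using xor_hypergraph_div_neq[OF edges(1)] xor_hypergraph_div_neq[OF edges(2)]
      xor_hypergraph_div_neq[OF edges(3)] distinct by simp_all
  moreover have lt: "f 1 < 3 * m" "f 2 < 3 * m" "f 3 < 3 * m" "f 4 < 3 * m" "f 5 < 3 * m" "f 6 < 3 * m"
    using xor_hypergraph_vertex_lt[OF edges(1)] xor_hypergraph_vertex_lt[OF edges(2)]
      xor_hypergraph_vertex_lt[OF edges(3)] by simp_all
  moreover have "c 1 < 3" "c 2 < 3" "c 3 < 3" "c 4 < 3" "c 5 < 3" "c 6 < 3"
    unfolding c_def using lt by (simp_all add: less_mult_imp_div_less)
  ultimately have "c 2 \<noteq> c 4" "c 4 \<noteq> c 6" "c 2 \<noteq> c 6"
    by linarith+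
  have sums: "xor (f 1 mod m) (xor (f 2 mod m) (f 3 mod m)) = 0"
    "xor (f 3 mod m) (xor (f 4 mod m) (f 5 mod m)) = 0"
    "xor (f 1 mod m) (xor (f 5 mod m) (f 6 mod m)) = 0"
    using xor_hypergraph_xor_eq_0 edges distinct by simp_all
  txt \<open>The values at f 1, f 3 and f 5 each occur in two of the three edge sums and cancel.\<close>
  have "xor (f 2 mod m) (xor (f 4 mod m) (f 6 mod m)) =
      xor (xor (f 1 mod m) (xor (f 2 mod m) (f 3 mod m)))
        (xor (xor (f 3 mod m) (xor (f 4 mod m) (f 5 mod m))) (xor (f 1 mod m) (xor (f 5 mod m) (f 6 mod m))))"
    by (simp add: ac_simps xor_cancel_left)
  then have "xor (f 2 mod m) (xor (f 4 mod m) (f 6 mod m)) = 0"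
    using sums by simp
  then have "{f 2, f 4, f 6} \<in> xor_hypergraph m"
    using xor_hypergraph_edgeI lt \<open>c 2 \<noteq> c 4\<close> \<open>c 4 \<noteq> c 6\<close> \<open>c 2 \<noteq> c 6\<close> unfolding c_def by simp
  then show False
    using open_triangle by simp
qed

lemma xor_hypergraph_no_induced_F7: "\<not> induced_copy V (xor_hypergraph m) F7_V F7_E"
  by (rule no_induced_F7_if_3_partite[where col = "\<lambda>u. u div m"])
    (use xor_hypergraph_vertex_lt xor_hypergraph_div_neq less_mult_imp_div_less in blast)+

end

section \<open>The extremal number\<close>

lemma finite_cards_hyp3: "finite {card E | E. hyp3 {..<n::nat} E \<and> P E}"
proof (rule finite_subset)
  show "{card E | E. hyp3 {..<n} E \<and> P E} \<subseteq> card ` Pow (Pow {..<n})"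
    unfolding hyp3_def by blast
qed simp

lemma card_le_ex_lin_ind:
  assumes "hyp3 {..<n} E" "linear_hyp E" "\<forall>(VH, EH)\<in>Fs. \<not> induced_copy {..<n} E VH EH"
  shows "card E \<le> ex_lin_ind n Fs"
  unfolding ex_lin_ind_def using assms by (intro Max_ge[OF finite_cards_hyp3]) blast

lemma no_induced_copy_in_empty: "e \<in> EH \<Longrightarrow> e \<subseteq> VH \<Longrightarrow> \<not> induced_copy V {} VH EH"
  unfolding induced_copy_def by blast

lemma ex_lin_ind_attained:
  assumes "\<forall>(VH, EH)\<in>Fs. \<exists>e\<in>EH. e \<subseteq> VH"
  obtains E where "hyp3 {..<n} E" "linear_hyp E" "\<forall>(VH, EH)\<in>Fs. \<not> induced_copy {..<n} E VH EH"
    "card E = ex_lin_ind n Fs"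
proof -
  let ?S = "{card E | E. hyp3 {..<n} E \<and> linear_hyp E \<and> (\<forall>(VH, EH)\<in>Fs. \<not> induced_copy {..<n} E VH EH)}"
  have "\<not> induced_copy {..<n} {} VH EH" if member: "(VH, EH) \<in> Fs" for VH EH
  proof -
    obtain e where "e \<in> EH" "e \<subseteq> VH"
      using assms member by auto
    then show ?thesis
      by (rule no_induced_copy_in_empty)
  qed
  then have "card {} \<in> ?S"
    unfolding hyp3_def linear_hyp_def by (intro CollectI exI[of _ "{}"]) auto
  then have "ex_lin_ind n Fs \<in> ?S"
    unfolding ex_lin_ind_def using finite_cards_hyp3 by (intro Max_in) auto
  then show ?thesis
    using that by auto
qed

lemma W3_F7_have_edges: "\<forall>(VH, EH)\<in>{(W3_V, W3_E), (F7_V, F7_E)}. \<exists>e\<in>EH. e \<subseteq> VH"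
  by (auto simp: W3_V_def W3_E_def F7_V_def F7_E_eq)

lemma ex_lin_ind_W3_F7_le: "real (ex_lin_ind n {(W3_V, W3_E), (F7_V, F7_E)}) \<le> real n ^ 2 / 9"
proof -
  obtain E where "hyp3 {..<n} E" "linear_hyp E"
    "\<not> induced_copy {..<n} E W3_V W3_E" "\<not> induced_copy {..<n} E F7_V F7_E"
    and "card E = ex_lin_ind n {(W3_V, W3_E), (F7_V, F7_E)}"
    using ex_lin_ind_attained[OF W3_F7_have_edges] by auto
  then show ?thesis
    using card_edges_le_if_linear_W3_F7_free[of "{..<n}" E] by simp
qed

lemma ex_lin_ind_W3_F7_ge: "(2 ^ k)\<^sup>2 \<le> ex_lin_ind (3 * 2 ^ k) {(W3_V, W3_E), (F7_V, F7_E)}"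
proof -
  note xor_closed = xor_less_power2[of _ k]
  have "card (xor_hypergraph (2 ^ k)) \<le> ex_lin_ind (3 * 2 ^ k) {(W3_V, W3_E), (F7_V, F7_E)}"
    using hyp3_xor_hypergraph[OF xor_closed] linear_xor_hypergraph[OF xor_closed]
      xor_hypergraph_no_induced_W3[OF xor_closed] xor_hypergraph_no_induced_F7[OF xor_closed]
    by (intro card_le_ex_lin_ind) auto
  then show ?thesis
    using card_xor_hypergraph[OF xor_closed] by simp
qed

lemma ex_lin_ind_W3_F7_eq:
  "real (ex_lin_ind (3 * 2 ^ k) {(W3_V, W3_E), (F7_V, F7_E)}) = real (3 * 2 ^ k) ^ 2 / 9"
proof -
  have "real (ex_lin_ind (3 * 2 ^ k) {(W3_V, W3_E), (F7_V, F7_E)}) \<le> real ((2 ^ k)\<^sup>2)"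
    using ex_lin_ind_W3_F7_le[of "3 * 2 ^ k"] by (simp add: power_mult_distrib)
  then have "ex_lin_ind (3 * 2 ^ k) {(W3_V, W3_E), (F7_V, F7_E)} = (2 ^ k)\<^sup>2"
    using ex_lin_ind_W3_F7_ge[of k] by (simp only: of_nat_le_iff)
  then show ?thesis
    by (simp add: power_mult_distrib)
qed

theorem theorem15:
  shows "(\<forall>(V::'a set) E. hyp3 V E \<longrightarrow> linear_hyp E \<longrightarrow>
            \<not> induced_copy V E W3_V W3_E \<longrightarrow> \<not> induced_copy V E F7_V F7_E \<longrightarrow>
            real (card E) \<le> real (card V) ^ 2 / 9)
       \<and> (\<forall>n. real (ex_lin_ind n {(W3_V, W3_E), (F7_V, F7_E)}) \<le> real n ^ 2 / 9)
       \<and> infinite {n. real (ex_lin_ind n {(W3_V, W3_E), (F7_V, F7_E)}) = real n ^ 2 / 9}"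
proof (intro conjI allI impI)
  show "real (card E) \<le> real (card V) ^ 2 / 9"
    if "hyp3 V E" "linear_hyp E" "\<not> induced_copy V E W3_V W3_E" "\<not> induced_copy V E F7_V F7_E"
    for V :: "'a set" and E
    using that by (rule card_edges_le_if_linear_W3_F7_free)
  show "real (ex_lin_ind n {(W3_V, W3_E), (F7_V, F7_E)}) \<le> real n ^ 2 / 9" for n
    by (rule ex_lin_ind_W3_F7_le)
  have "range (\<lambda>k::nat. 3 * 2 ^ k) \<subseteq> {n. real (ex_lin_ind n {(W3_V, W3_E), (F7_V, F7_E)}) = real n ^ 2 / 9}"
    using ex_lin_ind_W3_F7_eq by auto
  moreover have "infinite (range (\<lambda>k::nat. 3 * 2 ^ k :: nat))"
    by (rule range_inj_infinite) (simp add: inj_def)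
  ultimately show "infinite {n. real (ex_lin_ind n {(W3_V, W3_E), (F7_V, F7_E)}) = real n ^ 2 / 9}"
    by (rule infinite_super)
qed

end
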